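(* Let $K=\langle \mathcal{T}_{strict},\mathcal{T}_{C_1},\ldots,\mathcal{T}_{C_k},\mathcal{A}\rangle$ be a ranked $\mathcal{EL}^{+}_{\bot}$ knowledge base over $\mathcal{C}=\{C_1,\ldots,C_k\}$, and let $\mathcal{M}=\langle \Delta,<_{C_1},\ldots,<_{C_k},<,\cdot^I\rangle$ be a (finite) concept-wise multipreference interpretation. Then the global preference relation $<$ is irreflexive, transitive and well-founded.
   Context: $\mathcal{EL}^{+}_{\bot}$ concepts are built by $C::=A\mid\top\mid\bot\mid C\sqcap C\mid \exists r.C$ with $A$ a concept name and $r$ a role name; interpretations $I=\langle\Delta,\cdot^I\rangle$ are as usual ($(\exists r.C)^I=\{x\mid \exists y,(x,y)\in r^I, y\in C^I\}$ etc.); a TBox contains concept inclusions $C\sqsubseteq D$ and role inclusions $r_1\circ\cdots\circ r_n\sqsubseteq r$, an ABox contains assertions $C(a)$, $r(a,b)$; $\models$ denotes standard $\mathcal{EL}^{+}_{\bot}$ entailment. A typicality inclusion has the form $\mathbf{T}(C)\sqsubseteq D$. A ranked knowledge base over a finite set $\mathcal{C}=\{C_1,\ldots,C_k\}$ of $\mathcal{EL}^{+}_{\bot}$ concepts is a tuple $K=\langle \mathcal{T}_{strict},\mathcal{T}_{C_1},\ldots,\mathcal{T}_{C_k},\mathcal{A}\rangle$ where $\mathcal{T}_{strict}$ is a set of concept and role inclusions, $\mathcal{A}$ an ABox, and each $\mathcal{T}_{C_j}$ a finite set of pairs $(\mathbf{T}(C_j)\sqsubseteq D, r)$ with $r$ a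 non-negative integer (its rank). Specificity: for $C_h,C_j\in\mathcal{C}$, $C_h\succ C_j$ iff $\mathcal{T}_{strict}\models C_h\sqsubseteq C_j$ and $\mathcal{T}_{strict}\not\models C_j\sqsubseteq C_h$. A (finite) concept-wise multipreference interpretation is a tuple $\langle\Delta,<_{C_1},\ldots,<_{C_k},<,\cdot^I\rangle$ where $\Delta$ is a finite non-empty domain; each $<_{C_i}$ is an irreflexive, transitive, well-founded and modular relation on $\Delta$ (modular: $x<_{C_i}y$ implies $x<_{C_i}z$ or $z<_{C_i}y$ for all $z$); $x\leq_{C_j}y$ means that $y<_{C_j}x$ does not hold; the global relation $<$ is defined by: $x<y$ iff (i) $x<_{C_i}y$ for some $C_i\in\mathcal{C}$, and (ii) for all $C_j\in\mathcal{C}$, either $x\leq_{C_j}y$ or there is $C_h\in\mathcal{C}$ with $C_h\succ C_j$ and $x<_{C_h}y$; and $\cdot^I$ is an $\mathcal{EL}^{+}_{\bot}$ interpretation function extended by $(\mathbf{T}(C))^I=\min_<(C^I)=\{u\in C^I\mid \nexists z\in C^I, z<u\}$. *)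

theory Defs
  imports Main
begin

datatype ('c, 'r) concept =
    CName 'c
  | Top
  | Bot
  | Conj "('c, 'r) concept" "('c, 'r) concept"
  | Ex 'r "('c, 'r) concept"

datatype ('c, 'r) tbox_axiom =
    CI "('c, 'r) concept" "('c, 'r) concept"
  | RI "'r list" 'r

datatype ('c, 'r, 'i) abox_assertion =
    CAss "('c, 'r) concept" 'i
  | RAss 'r 'i 'i

record ('c, 'r, 'd) el_interp =
  dom :: "'d set"
  cint :: "'c \<Rightarrow> 'd set"
  rint :: "'r \<Rightarrow> ('d \<times> 'd) set"

fun ext :: "('c, 'r, 'd) el_interp \<Rightarrow> ('c, 'r) concept \<Rightarrow> 'd set" where
  "ext I (CName A) = cint I A"
| "ext I Top = dom I"
| "ext I Bot = {}"
| "ext I (Conj C D) = ext I C \<inter> ext I D"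
| "ext I (Ex r C) = {x \<in> dom I. \<exists>y. (x, y) \<in> rint I r \<and> y \<in> ext I C}"

fun role_comp :: "('c, 'r, 'd) el_interp \<Rightarrow> 'r list \<Rightarrow> ('d \<times> 'd) set" where
  "role_comp I [] = Id_on (dom I)"
| "role_comp I (r # rs) = rint I r O role_comp I rs"

definition is_interp :: "('c, 'r, 'd) el_interp \<Rightarrow> bool" where
  "is_interp I \<longleftrightarrow> dom I \<noteq> {} \<and> (\<forall>A. cint I A \<subseteq> dom I) \<and> (\<forall>r. rint I r \<subseteq> dom I \<times> dom I)"

fun sat_ax :: "('c, 'r, 'd) el_interp \<Rightarrow> ('c, 'r) tbox_axiom \<Rightarrow> bool" where
  "sat_ax I (CI C D) \<longleftrightarrow> ext I C \<subseteq> ext I D"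
| "sat_ax I (RI rs r) \<longleftrightarrow> role_comp I rs \<subseteq> rint I r"

(* Interpretation domains are
   taken inside the countably infinite type nat (any nonempty subset); by
   Loewenheim-Skolem for this first-order fragment this coincides with standard
   entailment. *)
definition entails :: "('c, 'r) tbox_axiom set \<Rightarrow> ('c, 'r) concept \<Rightarrow> ('c, 'r) concept \<Rightarrow> bool" where
  "entails T C D \<longleftrightarrow>
     (\<forall>I :: ('c, 'r, nat) el_interp. is_interp I \<and> (\<forall>ax\<in>T. sat_ax I ax) \<longrightarrow> ext I C \<subseteq> ext I D)"

(* Typicality inclusion T(C_j) \<sqsubseteq> D with rank r is represented as (D, r);
   TC j is the module T_{C_j}. *)
definition ranked_kb ::
  "('c, 'r) concept list \<Rightarrow> ('c, 'r) tbox_axiom set \<Rightarrow> (nat \<Rightarrow> (('c, 'r) concept \<times> nat) set)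
   \<Rightarrow> ('c, 'r, 'i) abox_assertion set \<Rightarrow> bool" where
  "ranked_kb Cs Tstrict TC Abox \<longleftrightarrow> (\<forall>j < length Cs. finite (TC j))"

definition more_specific :: "('c, 'r) tbox_axiom set \<Rightarrow> ('c, 'r) concept \<Rightarrow> ('c, 'r) concept \<Rightarrow> bool" where
  "more_specific T Ch Cj \<longleftrightarrow> entails T Ch Cj \<and> \<not> entails T Cj Ch"

definition modular_on :: "'d set \<Rightarrow> ('d \<times> 'd) set \<Rightarrow> bool" where
  "modular_on \<Delta> R \<longleftrightarrow> (\<forall>x\<in>\<Delta>. \<forall>y\<in>\<Delta>. \<forall>z\<in>\<Delta>. (x, y) \<in> R \<longrightarrow> (x, z) \<in> R \<or> (z, y) \<in> R)"

(* prefs i is <_{C_i} (for i < length Cs), a relation on the domain. *)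
definition global_pref ::
  "('c, 'r) tbox_axiom set \<Rightarrow> ('c, 'r) concept list \<Rightarrow> 'd set \<Rightarrow> (nat \<Rightarrow> ('d \<times> 'd) set) \<Rightarrow> ('d \<times> 'd) set" where
  "global_pref T Cs \<Delta> prefs =
     {(x, y). x \<in> \<Delta> \<and> y \<in> \<Delta> \<and>
        (\<exists>i < length Cs. (x, y) \<in> prefs i) \<and>
        (\<forall>j < length Cs. (y, x) \<notin> prefs j \<or>
           (\<exists>h < length Cs. more_specific T (Cs ! h) (Cs ! j) \<and> (x, y) \<in> prefs h))}"

definition cw_interp ::
  "('c, 'r) concept list \<Rightarrow> (nat \<Rightarrow> ('d \<times> 'd) set) \<Rightarrow> ('c, 'r, 'd) el_interp \<Rightarrow> bool" where
  "cw_interp Cs prefs I \<longleftrightarrow>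
     is_interp I \<and> finite (dom I) \<and>
     (\<forall>i < length Cs. prefs i \<subseteq> dom I \<times> dom I \<and> irrefl (prefs i) \<and> trans (prefs i)
        \<and> wf (prefs i) \<and> modular_on (dom I) (prefs i))"

(* extension of typicality concepts: T(C)^I = min_<(C^I) *)
definition typ_ext :: "('d \<times> 'd) set \<Rightarrow> 'd set \<Rightarrow> 'd set" where
  "typ_ext L S = {u \<in> S. \<not> (\<exists>z\<in>S. (z, u) \<in> L)}"

end

theory Submission
  imports Defs
begin

text \<open>
  The global preference compares two elements by the most specific concepts on which they
  differ. Given x < y < z, pick among the concepts C with x <_C y or y <_C z one that is
  maximally specific (specificity is a strict partial order on finitely many concepts, hence
  well-founded). Modularity of <_C then yields x <_C z, since the alternative would have to
  be overridden by a strictly more specific concept, contradicting maximality. The same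
  argument, applied to the concepts more specific than some C_j with z <_C_j x, shows that
  every such reversal is overridden. Irreflexivity is inherited from the <_C_i, and
  well-foundedness follows since an irreflexive transitive relation on a finite domain is
  acyclic.
\<close>

lemma wf_if_finite_irrefl_trans: "finite r \<Longrightarrow> irrefl r \<Longrightarrow> trans r \<Longrightarrow> wf r"
  by (simp add: finite_acyclic_wf acyclic_irrefl)

text \<open>
  \<^const>\<open>global_pref\<close> abstracted over the index set and the priority relation on indices:
  \<open>(h, j) \<in> S\<close> means that \<open>h\<close> overrides \<open>j\<close>.
\<close>

definition priority_pref ::
  "'i set \<Rightarrow> ('i \<times> 'i) set \<Rightarrow> 'd set \<Rightarrow> ('i \<Rightarrow> ('d \<times> 'd) set) \<Rightarrow> ('d \<times> 'd) set" where
  "priority_pref Idx S \<Delta> R =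
     {(x, y). x \<in> \<Delta> \<and> y \<in> \<Delta> \<and> (\<exists>i\<in>Idx. (x, y) \<in> R i) \<and>
        (\<forall>j\<in>Idx. (y, x) \<notin> R j \<or> (\<exists>h\<in>Idx. (h, j) \<in> S \<and> (x, y) \<in> R h))}"

lemma priority_prefD:
  assumes "(x, y) \<in> priority_pref Idx S \<Delta> R"
  shows "x \<in> \<Delta>" "y \<in> \<Delta>" "\<exists>i\<in>Idx. (x, y) \<in> R i"
    and "\<And>j. j \<in> Idx \<Longrightarrow> (y, x) \<in> R j \<Longrightarrow> \<exists>h\<in>Idx. (h, j) \<in> S \<and> (x, y) \<in> R h"
  using assms unfolding priority_pref_def by auto

lemma irrefl_priority_pref:
  assumes "\<forall>i\<in>Idx. irrefl (R i)"
  shows "irrefl (priority_pref Idx S \<Delta> R)"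
  using assms unfolding irrefl_def priority_pref_def by blast

lemma priority_pref_at_maximal_index:
  assumes xy: "(x, y) \<in> priority_pref Idx S \<Delta> R"
    and yz: "(y, z) \<in> priority_pref Idx S \<Delta> R"
    and modular: "modular_on \<Delta> (R m)"
    and m: "m \<in> Idx" "(x, y) \<in> R m \<or> (y, z) \<in> R m"
    and maximal: "\<And>h. h \<in> Idx \<Longrightarrow> (h, m) \<in> S \<Longrightarrow> (x, y) \<notin> R h \<and> (y, z) \<notin> R h"
  shows "(x, z) \<in> R m"
proof -
  have dom: "x \<in> \<Delta>" "y \<in> \<Delta>" "z \<in> \<Delta>"
    using priority_prefD(1,2)[OF xy] priority_prefD(2)[OF yz] by auto
  have "(z, y) \<notin> R m"
    using priority_prefD(4)[OF yz m(1)] maximal by blast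
  moreover have "(y, x) \<notin> R m"
    using priority_prefD(4)[OF xy m(1)] maximal by blast
  ultimately show ?thesis
    using m(2) modular dom unfolding modular_on_def by blast
qed

lemma priority_pref_witness_in_upward_closed:
  assumes xy: "(x, y) \<in> priority_pref Idx S \<Delta> R"
    and yz: "(y, z) \<in> priority_pref Idx S \<Delta> R"
    and modular: "\<forall>i\<in>Idx. modular_on \<Delta> (R i)"
    and "wf S"
    and Q: "Q \<subseteq> Idx" "i \<in> Q" "(x, y) \<in> R i \<or> (y, z) \<in> R i"
    and upward_closed: "\<And>h m. h \<in> Idx \<Longrightarrow> m \<in> Q \<Longrightarrow> (h, m) \<in> S \<Longrightarrow> h \<in> Q"
  shows "\<exists>m\<in>Q. (x, z) \<in> R m"
proof -
  let ?witnesses = "{m \<in> Q. (x, y) \<in> R m \<or> (y, z) \<in> R m}"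
  have "i \<in> ?witnesses" using Q(2,3) by blast
  then obtain m where m: "m \<in> ?witnesses"
    and minimal: "\<And>h. (h, m) \<in> S \<Longrightarrow> h \<notin> ?witnesses"
    by (rule wfE_min[OF \<open>wf S\<close>]) (rule that)
  have "(x, z) \<in> R m"
  proof (rule priority_pref_at_maximal_index[OF xy yz])
    show "m \<in> Idx" using m Q(1) by blast
    then show "modular_on \<Delta> (R m)" using modular by blast
    show "(x, y) \<in> R m \<or> (y, z) \<in> R m" using m by blast
    show "(x, y) \<notin> R h \<and> (y, z) \<notin> R h" if "h \<in> Idx" "(h, m) \<in> S" for h
      using minimal[OF that(2)] upward_closed[OF that(1) _ that(2)] m by blast
  qed
  with m show ?thesis by blast
qed

lemma trans_priority_pref:
  assumes modular: "\<forall>i\<in>Idx. modular_on \<Delta> (R i)"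
    and "trans S" and "wf S"
  shows "trans (priority_pref Idx S \<Delta> R)"
proof (rule transI)
  fix x y z
  let ?P = "priority_pref Idx S \<Delta> R"
  assume xy: "(x, y) \<in> ?P" and yz: "(y, z) \<in> ?P"
  note witness = priority_pref_witness_in_upward_closed[OF xy yz modular \<open>wf S\<close>]
  have dom: "x \<in> \<Delta>" "y \<in> \<Delta>" "z \<in> \<Delta>"
    using priority_prefD(1,2)[OF xy] priority_prefD(2)[OF yz] by auto
  obtain i where "i \<in> Idx" "(x, y) \<in> R i"
    using priority_prefD(3)[OF xy] by blast
  then have "\<exists>i\<in>Idx. (x, z) \<in> R i"
    using witness[of Idx i] by blast
  moreover have "\<exists>h\<in>Idx. (h, j) \<in> S \<and> (x, z) \<in> R h"
    if j: "j \<in> Idx" "(z, x) \<in> R j" for j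
  proof -
    let ?above_j = "{h \<in> Idx. (h, j) \<in> S}"
    have "(z, y) \<in> R j \<or> (y, x) \<in> R j"
      using j modular dom unfolding modular_on_def by blast
    then obtain h where h: "h \<in> ?above_j" "(x, y) \<in> R h \<or> (y, z) \<in> R h"
      using priority_prefD(4)[OF xy j(1)] priority_prefD(4)[OF yz j(1)] by blast
    have "\<exists>m\<in>?above_j. (x, z) \<in> R m"
    proof (rule witness[OF _ h])
      show "?above_j \<subseteq> Idx" by blast
      show "h' \<in> ?above_j" if "h' \<in> Idx" "m \<in> ?above_j" "(h', m) \<in> S" for h' m
        using that transD[OF \<open>trans S\<close>] by blast
    qed
    then show ?thesis by blast
  qed
  ultimately show "(x, z) \<in> ?P"
    unfolding priority_pref_def using dom by blast
qed

lemma more_specific_irrefl: "\<not> more_specific T C C"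
  by (simp add: more_specific_def)

lemma more_specific_trans:
  "more_specific T A B \<Longrightarrow> more_specific T B C \<Longrightarrow> more_specific T A C"
  unfolding more_specific_def entails_def by blast

definition specificity :: "('c, 'r) tbox_axiom set \<Rightarrow> ('c, 'r) concept list \<Rightarrow> (nat \<times> nat) set" where
  "specificity T Cs =
     {(h, j). h < length Cs \<and> j < length Cs \<and> more_specific T (Cs ! h) (Cs ! j)}"

lemma trans_specificity: "trans (specificity T Cs)"
  unfolding trans_def specificity_def using more_specific_trans by blast

lemma wf_specificity: "wf (specificity T Cs)"
proof (rule wf_if_finite_irrefl_trans)
  show "finite (specificity T Cs)"
    by (rule finite_subset[of _ "{..<length Cs} \<times> {..<length Cs}"])
       (auto simp: specificity_def)
  show "irrefl (specificity T Cs)"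
    by (simp add: irrefl_def specificity_def more_specific_irrefl)
qed (rule trans_specificity)

lemma global_pref_eq_priority_pref:
  "global_pref T Cs \<Delta> prefs = priority_pref {..<length Cs} (specificity T Cs) \<Delta> prefs"
  unfolding global_pref_def priority_pref_def specificity_def by auto

theorem proposition1:
  fixes Cs :: "('c, 'r) concept list"
    and Tstrict :: "('c, 'r) tbox_axiom set"
    and TC :: "nat \<Rightarrow> (('c, 'r) concept \<times> nat) set"
    and Abox :: "('c, 'r, 'i) abox_assertion set"
    and prefs :: "nat \<Rightarrow> ('d \<times> 'd) set"
    and I :: "('c, 'r, 'd) el_interp"
  assumes "ranked_kb Cs Tstrict TC Abox"
    and "cw_interp Cs prefs I"
  shows "irrefl (global_pref Tstrict Cs (dom I) prefs)
       \<and> trans (global_pref Tstrict Cs (dom I) prefs)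
       \<and> wf (global_pref Tstrict Cs (dom I) prefs)"
proof -
  let ?G = "global_pref Tstrict Cs (dom I) prefs"
  have concept_prefs: "\<forall>i\<in>{..<length Cs}. irrefl (prefs i) \<and> modular_on (dom I) (prefs i)"
    using assms(2) by (simp add: cw_interp_def)
  have irreflexive: "irrefl ?G"
    unfolding global_pref_eq_priority_pref using concept_prefs
    by (blast intro: irrefl_priority_pref)
  have transitive: "trans ?G"
    unfolding global_pref_eq_priority_pref using concept_prefs
    by (blast intro: trans_priority_pref trans_specificity wf_specificity)
  have "finite ?G"
    by (rule finite_subset[of _ "dom I \<times> dom I"])
       (use assms(2) in \<open>auto simp: global_pref_def cw_interp_def\<close>)
  with irreflexive transitive show ?thesis
    by (simp add: wf_if_finite_irrefl_trans)
qed

end
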